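(* Let $X$ be a real normed space, $\mathcal M=\{M_1,\dots,M_n\}\subset\mathcal P^f_{\mathrm{Cl,Conv}}(X)$, $\Sigma(\mathcal M)\neq\emptyset$ and $d=(d_1,\dots,d_n)\in\Omega(\mathcal M)$. Suppose there is an index $s$ such that every nonempty set of the form $B_r(M_s)\cap K_d$ ($0\le r<\infty$) lies in the same finiteness class as the $M_i$. Then for every $K\in\Sigma_d(\mathcal M)$ there exists $i$ with $d_i=\sup_{x\in M_i}|x\,K|$.
   Context: For a metric space $X$, $p\in X$, $A\subset X$: $|p\,A|=\inf_{a\in A}|p\,a|$ ($=\infty$ if $A=\emptyset$); for $0\le r<\infty$, $B_r(A)=\{p:|p\,A|\le r\}$. For nonempty $A,B$, $d_H(A,B)=\max\{\sup_{a\in A}|a\,B|,\sup_{b\in B}|b\,A|\}\in[0,\infty]$. $\mathcal P_{\mathrm{Cl}}(X)$ is the set of nonempty closed subsets of $X$ with $d_H$; a finiteness class is an equivalence class of $A\sim B\iff d_H(A,B)<\infty$. $\mathcal P^f_{\mathrm{Cl,Conv}}(X)$ denotes a fixed finiteness class of the space of nonempty closed convex subsets of $X$ (a family of nonempty closed convex sets pairwise at finite Hausdorff distance, maximal with this property); let $\mathcal P^f_{\mathrm{Cl}}(X)$ be the finiteness class of $\mathcal P_{\mathrm{Cl}}(X)$ containing it. For $\mathcal M=\{M_1,\dots,M_n\}$ in it, $S_{\mathcal M}(Y)=\sum_i d_H(Y,M_i)$; $\Sigma(\mathcal M)$ is the set of minimizers of $S_{\mathcal M}$ over $\mathcal P^f_{\mathrm{Cl}}(X)$;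 for $K\in\Sigma(\mathcal M)$, $d(K)=(d_H(K,M_1),\dots,d_H(K,M_n))$; $\Omega(\mathcal M)=\{d(K):K\in\Sigma(\mathcal M)\}$; for $d\in\Omega(\mathcal M)$, $\Sigma_d(\mathcal M)=\{K\in\Sigma(\mathcal M):d(K)=d\}$ and $K_d=\bigcap_{i=1}^nB_{d_i}(M_i)$. *)

theory Defs
  imports "HOL-Analysis.Analysis"
begin

text \<open>Point-to-set distance |p A| with values in the extended reals (infinite for empty A).\<close>
definition pdist :: "'a::metric_space \<Rightarrow> 'a set \<Rightarrow> ereal" where
  "pdist p A = (INF a\<in>A. ereal (dist p a))"

definition nbhd :: "real \<Rightarrow> 'a::metric_space set \<Rightarrow> 'a set" where
  "nbhd r A = {p. pdist p A \<le> ereal r}"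

definition dH :: "'a::metric_space set \<Rightarrow> 'a set \<Rightarrow> ereal" where
  "dH A B = max (SUP a\<in>A. pdist a B) (SUP b\<in>B. pdist b A)"

definition fin_class :: "'a::metric_space set \<Rightarrow> 'a set set" where
  "fin_class A = {Y. Y \<noteq> {} \<and> closed Y \<and> dH Y A < \<infinity>}"

definition S_M :: "nat \<Rightarrow> (nat \<Rightarrow> 'a::metric_space set) \<Rightarrow> 'a set \<Rightarrow> ereal" where
  "S_M n M Y = (\<Sum>i<n. dH Y (M i))"

definition Sigma_M :: "nat \<Rightarrow> (nat \<Rightarrow> 'a::metric_space set) \<Rightarrow> 'a set set" where
  "Sigma_M n M = {K \<in> fin_class (M 0). \<forall>Y \<in> fin_class (M 0). S_M n M K \<le> S_M n M Y}"

definition dvec :: "nat \<Rightarrow> (nat \<Rightarrow> 'a::metric_space set) \<Rightarrow> 'a set \<Rightarrow> ereal list" where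
  "dvec n M K = map (\<lambda>i. dH K (M i)) [0..<n]"

definition Omega_M :: "nat \<Rightarrow> (nat \<Rightarrow> 'a::metric_space set) \<Rightarrow> ereal list set" where
  "Omega_M n M = dvec n M ` Sigma_M n M"

definition Sigma_d :: "nat \<Rightarrow> (nat \<Rightarrow> 'a::metric_space set) \<Rightarrow> ereal list \<Rightarrow> 'a set set" where
  "Sigma_d n M d = {K \<in> Sigma_M n M. dvec n M K = d}"

definition K_d :: "nat \<Rightarrow> (nat \<Rightarrow> 'a::metric_space set) \<Rightarrow> ereal list \<Rightarrow> 'a set" where
  "K_d n M d = (\<Inter>i<n. {p. pdist p (M i) \<le> d ! i})"

end

theory Submission
  imports Defs
begin

text \<open>
  Let K be a minimizer with finite distances D_i = d_H(K, M_i) and suppose, contrary to the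
  claim, that every M_i lies in the (D_i - c)-neighbourhood of K for some c > 0. Move each point
  k of K the fraction t = c / (4 D_s) of the way towards a point of K that is (D_s - c/2)-close
  to M_s. Since the distance functions |. M_i| are convex, the moved point stays in K_d and lies
  in B_r(M_s) with r = D_s - t c/2, and it is at most c/2 away from k. Hence the set
  L = B_r(M_s) \<inter> K_d, which is admissible by hypothesis, satisfies d_H(L, M_i) <= D_i for all i
  and d_H(L, M_s) <= max r (D_s - c/2) < D_s, so S_M(L) < S_M(K), contradicting minimality.
\<close>

lemma pdist_eq_infdist:
  assumes "A \<noteq> {}" shows "pdist p A = ereal (infdist p A)"
proof -
  obtain a where a: "a \<in> A" using assms by blast
  have "0 \<le> (INF a\<in>A. ereal (dist p a))" by (rule INF_greatest) simp
  moreover have "(INF a\<in>A. ereal (dist p a)) \<le> ereal (dist p a)" using a by (rule INF_lower)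
  ultimately have "ereal (INF a\<in>A. dist p a) = (INF a\<in>A. ereal (dist p a))" by (intro ereal_INF) auto
  then show ?thesis unfolding pdist_def infdist_notempty[OF assms] by simp
qed

lemma dH_eq_SUP_infdist:
  assumes "A \<noteq> {}" "B \<noteq> {}"
  shows "dH A B = max (SUP a\<in>A. ereal (infdist a B)) (SUP b\<in>B. ereal (infdist b A))"
  using assms by (simp add: dH_def pdist_eq_infdist)

lemma dH_le_iff:
  assumes "A \<noteq> {}" "B \<noteq> {}"
  shows "dH A B \<le> ereal e \<longleftrightarrow> (\<forall>a\<in>A. infdist a B \<le> e) \<and> (\<forall>b\<in>B. infdist b A \<le> e)"
  by (simp add: dH_eq_SUP_infdist[OF assms] SUP_le_iff)

lemma dH_nonneg:
  assumes "A \<noteq> {}" "B \<noteq> {}" shows "0 \<le> dH A B"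
proof -
  obtain a where "a \<in> A" using assms by blast
  then have "ereal (infdist a B) \<le> dH A B"
    unfolding dH_eq_SUP_infdist[OF assms] by (meson SUP_upper max.coboundedI1)
  then show ?thesis using infdist_nonneg[of a B] by (metis ereal_less_eq(5) order_trans)
qed

lemma exists_dist_less_infdist_add:
  assumes "A \<noteq> {}" "0 < e" obtains a where "a \<in> A" "dist x a < infdist x A + e"
proof -
  have "(INF a\<in>A. dist x a) < infdist x A + e"
    using assms by (simp add: infdist_notempty)
  moreover have "bdd_below ((\<lambda>a. dist x a) ` A)" by (rule bdd_belowI[of _ 0]) auto
  ultimately show ?thesis using that cINF_less_iff[of A "\<lambda>a. dist x a"] assms(1) by blast
qed

lemma infdist_le_infdist_add:
  assumes "A \<noteq> {}" "\<And>a. a \<in> A \<Longrightarrow> infdist a B \<le> e"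
  shows "infdist x B \<le> infdist x A + e"
proof -
  have "infdist x B - e \<le> dist x a" if "a \<in> A" for a
    using infdist_triangle[of x B a] assms(2)[OF that] by linarith
  then have "infdist x B - e \<le> (INF a\<in>A. dist x a)" using assms(1) by (intro cINF_greatest)
  then show ?thesis using assms(1) by (simp add: infdist_notempty)
qed

lemma convex_on_infdist:
  fixes M :: "'a::real_normed_vector set"
  assumes "convex M" shows "convex_on UNIV (\<lambda>x. infdist x M)"
proof (cases "M = {}")
  case True
  then show ?thesis by (simp add: infdist_def convex_on_const)
next
  case False
  show ?thesis
  proof (rule convex_onI)
    fix t x y assume t: "0 < t" "t < (1::real)"
    show "infdist ((1-t) *\<^sub>R x + t *\<^sub>R y) M \<le> (1-t) * infdist x M + t * infdist y M"
    proof (rule field_le_epsilon)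
      fix e :: real assume "0 < e"
      obtain m1 where m1: "m1 \<in> M" "dist x m1 < infdist x M + e"
        using exists_dist_less_infdist_add[OF False \<open>0 < e\<close>] by blast
      obtain m2 where m2: "m2 \<in> M" "dist y m2 < infdist y M + e"
        using exists_dist_less_infdist_add[OF False \<open>0 < e\<close>] by blast
      have "(1-t) *\<^sub>R m1 + t *\<^sub>R m2 \<in> M" using convexD[OF assms m1(1) m2(1)] t by simp
      then have "infdist ((1-t) *\<^sub>R x + t *\<^sub>R y) M
          \<le> norm ((1-t) *\<^sub>R (x - m1) + t *\<^sub>R (y - m2))"
        by (metis infdist_le dist_norm scaleR_right_diff_distrib add_diff_add)
      also have "\<dots> \<le> (1-t) * dist x m1 + t * dist y m2"
        using norm_triangle_ineq[of "(1-t) *\<^sub>R (x - m1)" "t *\<^sub>R (y - m2)"] t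
        by (simp add: dist_norm)
      also have "\<dots> \<le> (1-t) * (infdist x M + e) + t * (infdist y M + e)"
        using m1 m2 t by (intro add_mono mult_left_mono) auto
      finally show "infdist ((1-t) *\<^sub>R x + t *\<^sub>R y) M \<le> (1-t) * infdist x M + t * infdist y M + e"
        by (simp add: algebra_simps)
    qed
  qed simp
qed

definition dist_sublevel :: "nat \<Rightarrow> (nat \<Rightarrow> 'a::metric_space set) \<Rightarrow> (nat \<Rightarrow> real) \<Rightarrow> 'a set" where
  "dist_sublevel n M D = {p. \<forall>i<n. infdist p (M i) \<le> D i}"

lemma nbhd_Int_K_d_eq_dist_sublevel:
  assumes "\<And>i. i < n \<Longrightarrow> M i \<noteq> {}" "\<And>i. i < n \<Longrightarrow> d ! i = ereal (D i)" "s < n" "r \<le> D s"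
  shows "nbhd r (M s) \<inter> K_d n M d = dist_sublevel n M (D(s := r))"
  using assms by (auto simp: nbhd_def K_d_def dist_sublevel_def pdist_eq_infdist)

lemma exists_shift_into_smaller_dist_sublevel:
  fixes M :: "nat \<Rightarrow> 'a::real_normed_vector set"
  assumes convex: "\<And>i. i < n \<Longrightarrow> convex (M i)" and "M s \<noteq> {}" "s < n" "0 < c"
    and K_sub: "K \<subseteq> dist_sublevel n M D"
    and Ms_near_K: "\<And>x. x \<in> M s \<Longrightarrow> infdist x K \<le> D s - c"
  obtains r where "0 \<le> r" "r < D s" "\<And>k. k \<in> K \<Longrightarrow> \<exists>p\<in>dist_sublevel n M (D(s := r)). dist k p \<le> c / 2"
proof -
  obtain x0 where "x0 \<in> M s" using \<open>M s \<noteq> {}\<close> by blast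
  then have "c \<le> D s" using Ms_near_K infdist_nonneg[of x0 K] by fastforce
  define t where "t = c / (4 * D s)"
  have t: "0 < t" "t \<le> 1" "t * (2 * D s) = c / 2" unfolding t_def using \<open>0 < c\<close> \<open>c \<le> D s\<close> by auto
  define r where "r = D s - t * c / 2"
  have "0 < t * c" "t * c \<le> c" using mult_left_le_one_le[of c t] t \<open>0 < c\<close> by simp_all
  then have "0 \<le> r" "r < D s" unfolding r_def using \<open>c \<le> D s\<close> by linarith+
  moreover have "\<exists>p\<in>dist_sublevel n M (D(s := r)). dist k p \<le> c / 2" if "k \<in> K" for k
  proof -
    have k_in: "\<forall>i<n. infdist k (M i) \<le> D i" using K_sub \<open>k \<in> K\<close> by (auto simp: dist_sublevel_def)
    have "0 < c / 2" using \<open>0 < c\<close> by simp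
    obtain m where m: "m \<in> M s" "dist k m < infdist k (M s) + c / 2"
      using exists_dist_less_infdist_add[OF \<open>M s \<noteq> {}\<close> \<open>0 < c / 2\<close>] by blast
    obtain k2 where k2: "k2 \<in> K" "dist m k2 < infdist m K + c / 2"
      using exists_dist_less_infdist_add[OF _ \<open>0 < c / 2\<close>] \<open>k \<in> K\<close> by blast
    have k2_in: "\<forall>i<n. infdist k2 (M i) \<le> D i" using K_sub k2(1) by (auto simp: dist_sublevel_def)
    have "dist m k2 < D s - c / 2" using k2(2) Ms_near_K[OF m(1)] by simp
    then have "infdist k2 (M s) \<le> D s - c / 2"
      using infdist_le[OF m(1), of k2] by (simp add: dist_commute)
    have "dist k k2 \<le> 2 * D s"
      using dist_triangle[of k k2 m] m(2) k_in \<open>s < n\<close> \<open>dist m k2 < D s - c / 2\<close> by fastforce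
    define p where "p = (1 - t) *\<^sub>R k + t *\<^sub>R k2"
    have convex_bound: "infdist p (M i) \<le> (1 - t) * infdist k (M i) + t * infdist k2 (M i)"
      if "i < n" for i
      unfolding p_def using convex_onD[OF convex_on_infdist[OF convex[OF that]]] t by simp
    have "infdist p (M i) \<le> (D(s := r)) i" if "i < n" for i
    proof (cases "i = s")
      case True
      have "infdist p (M s) \<le> (1 - t) * D s + t * (D s - c / 2)"
        using convex_bound[OF \<open>s < n\<close>] k_in \<open>s < n\<close> \<open>infdist k2 (M s) \<le> D s - c / 2\<close> t
        by (smt (verit) mult_left_mono)
      then show ?thesis using True by (simp add: r_def algebra_simps)
    next
      case False
      have "infdist p (M i) \<le> (1 - t) * D i + t * D i"
        using convex_bound[OF that] k_in k2_in that t by (smt (verit) mult_left_mono)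
      then show ?thesis using False by (simp add: algebra_simps)
    qed
    moreover have "dist k p = t * dist k k2"
      unfolding p_def dist_norm using t(1)
      by (metis (no_types, lifting) abs_of_pos add_diff_cancel_left diff_add_eq dist_norm
          norm_scaleR scaleR_collapse scaleR_right_diff_distrib)
    then have "dist k p \<le> c / 2"
      using \<open>dist k k2 \<le> 2 * D s\<close> t by (metis mult_left_mono less_imp_le)
    ultimately show ?thesis unfolding dist_sublevel_def by blast
  qed
  ultimately show ?thesis using that by blast
qed

lemma exists_dist_sublevel_closer_in_dH:
  fixes M :: "nat \<Rightarrow> 'a::real_normed_vector set"
  assumes M: "\<And>i. i < n \<Longrightarrow> M i \<noteq> {} \<and> convex (M i)" and "s < n" "0 < c" "K \<noteq> {}"
    and K_sub: "K \<subseteq> dist_sublevel n M D"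
    and M_near_K: "\<And>i x. i < n \<Longrightarrow> x \<in> M i \<Longrightarrow> infdist x K \<le> D i - c"
  obtains r where "0 \<le> r" "r \<le> D s" "dist_sublevel n M (D(s := r)) \<noteq> {}"
    "\<And>i. i < n \<Longrightarrow> dH (dist_sublevel n M (D(s := r))) (M i) \<le> ereal (D i)"
    "dH (dist_sublevel n M (D(s := r))) (M s) < ereal (D s)"
proof -
  obtain r where r: "0 \<le> r" "r < D s"
    and near: "\<And>k. k \<in> K \<Longrightarrow> \<exists>p\<in>dist_sublevel n M (D(s := r)). dist k p \<le> c / 2"
    using exists_shift_into_smaller_dist_sublevel[OF _ _ \<open>s < n\<close> \<open>0 < c\<close> K_sub M_near_K] M \<open>s < n\<close>
    by blast
  let ?L = "dist_sublevel n M (D(s := r))"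
  have "?L \<noteq> {}" using near \<open>K \<noteq> {}\<close> by blast
  have L_near_M: "infdist p (M i) \<le> (D(s := r)) i" if "i < n" "p \<in> ?L" for i p
    using that by (simp add: dist_sublevel_def)
  have M_near_L: "infdist x ?L \<le> D i - c / 2" if "i < n" "x \<in> M i" for i x
  proof -
    have "infdist k ?L \<le> c / 2" if "k \<in> K" for k
      using near[OF that] by (blast intro: infdist_le2)
    then have "infdist x ?L \<le> infdist x K + c / 2"
      by (rule infdist_le_infdist_add[OF \<open>K \<noteq> {}\<close>])
    then show ?thesis using M_near_K[OF that] by simp
  qed
  have "dH ?L (M i) \<le> ereal (D i)" if "i < n" for i
  proof -
    have "(D(s := r)) i \<le> D i" using r by simp
    then have "\<forall>p\<in>?L. infdist p (M i) \<le> D i" using L_near_M[OF that] by (meson order_trans)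
    moreover have "\<forall>x\<in>M i. infdist x ?L \<le> D i" using M_near_L[OF that] \<open>0 < c\<close> by fastforce
    ultimately show ?thesis unfolding dH_le_iff[OF \<open>?L \<noteq> {}\<close> conjunct1[OF M[OF that]]] by blast
  qed
  moreover have "dH ?L (M s) \<le> ereal (max r (D s - c / 2))"
    unfolding dH_le_iff[OF \<open>?L \<noteq> {}\<close> conjunct1[OF M[OF \<open>s < n\<close>]]]
    using L_near_M[OF \<open>s < n\<close>] M_near_L[OF \<open>s < n\<close>] by fastforce
  then have "dH ?L (M s) < ereal (D s)"
    using r \<open>0 < c\<close> by (simp add: le_less_trans)
  ultimately show ?thesis using that r \<open>?L \<noteq> {}\<close> by simp
qed

lemma exists_uniform_gap:
  assumes "finite I" "\<And>i. i \<in> I \<Longrightarrow> (SUP x\<in>A i. ereal (f i x)) < ereal (D i)"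
  obtains c where "0 < c" "\<And>i x. i \<in> I \<Longrightarrow> x \<in> A i \<Longrightarrow> f i x \<le> D i - c"
proof -
  have "\<forall>\<^sub>F c in at_right 0. (SUP x\<in>A i. ereal (f i x)) < ereal (D i - c)" if "i \<in> I" for i
  proof (rule order_tendstoD(1)[OF _ assms(2)[OF that]])
    show "((\<lambda>c. ereal (D i - c)) \<longlongrightarrow> ereal (D i)) (at_right 0)"
      by (intro tendsto_eq_intros) auto
  qed
  then have "\<forall>\<^sub>F c in at_right 0. \<forall>i\<in>I. (SUP x\<in>A i. ereal (f i x)) < ereal (D i - c)"
    using assms(1) by (simp add: eventually_ball_finite)
  then obtain b where "0 < b"
    and b: "\<And>c. 0 < c \<Longrightarrow> c < b \<Longrightarrow> \<forall>i\<in>I. (SUP x\<in>A i. ereal (f i x)) < ereal (D i - c)"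
    by (auto simp: eventually_at_right_field)
  have "f i x \<le> D i - b / 2" if "i \<in> I" "x \<in> A i" for i x
  proof -
    have "ereal (f i x) \<le> (SUP x\<in>A i. ereal (f i x))" using \<open>x \<in> A i\<close> by (rule SUP_upper)
    also have "\<dots> < ereal (D i - b / 2)" using b[of "b / 2"] \<open>0 < b\<close> \<open>i \<in> I\<close> by simp
    finally show ?thesis by simp
  qed
  then show ?thesis using that[of "b / 2"] \<open>0 < b\<close> by simp
qed

lemma sum_ereal_less_sum:
  assumes "finite I" "s \<in> I" "\<And>i. i \<in> I \<Longrightarrow> 0 \<le> f i" "\<And>i. i \<in> I \<Longrightarrow> f i \<le> ereal (g i)"
    and "f s < ereal (g s)"
  shows "sum f I < ereal (sum g I)"
proof -
  have real_f: "f i = ereal (real_of_ereal (f i))" if "i \<in> I" for i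
    using assms(3,4)[OF that] by (cases "f i") auto
  then have "sum f I = ereal (\<Sum>i\<in>I. real_of_ereal (f i))"
    by (simp add: sum_ereal[symmetric] cong: sum.cong)
  moreover have "(\<Sum>i\<in>I. real_of_ereal (f i)) < sum g I"
  proof (rule sum_strict_mono_ex1[OF assms(1)])
    show "\<forall>i\<in>I. real_of_ereal (f i) \<le> g i" using real_f assms(4) by (metis ereal_less_eq(3))
    have "real_of_ereal (f s) < g s" using real_f[OF assms(2)] assms(5) by (metis less_ereal.simps(1))
    then show "\<exists>i\<in>I. real_of_ereal (f i) < g i" using assms(2) by blast
  qed
  ultimately show ?thesis by simp
qed

lemma Sigma_M_dH_real:
  assumes "K \<in> Sigma_M n M" "0 < n" "\<And>j. j < n \<Longrightarrow> M j \<noteq> {}" "closed (M 0)"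
    and "\<And>j. j < n \<Longrightarrow> dH (M 0) (M j) < \<infinity>"
  obtains D where "\<And>i. i < n \<Longrightarrow> dH K (M i) = ereal (D i)"
proof -
  have "M 0 \<in> fin_class (M 0)" using assms(2-5) by (simp add: fin_class_def)
  then have K_min: "S_M n M K \<le> S_M n M (M 0)" and "K \<noteq> {}"
    using assms(1) by (auto simp: Sigma_M_def fin_class_def)
  have "dH K (M i) = ereal (real_of_ereal (dH K (M i)))" if "i < n" for i
  proof -
    have "dH K (M i) = (\<Sum>j\<in>{i}. dH K (M j))" by simp
    also have "\<dots> \<le> S_M n M K"
      unfolding S_M_def using that assms(3) \<open>K \<noteq> {}\<close> by (intro sum_mono2) (auto intro: dH_nonneg)
    also have "\<dots> \<le> S_M n M (M 0)" by (rule K_min)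
    also have "\<dots> < \<infinity>" using assms(5) by (simp add: S_M_def sum_Pinfty less_top)
    finally have "dH K (M i) < \<infinity>" .
    moreover have "0 \<le> dH K (M i)" using dH_nonneg[OF \<open>K \<noteq> {}\<close> assms(3)[OF that]] .
    ultimately show ?thesis by (cases "dH K (M i)") auto
  qed
  then show ?thesis by (rule that)
qed

lemma exists_SUP_infdist_eq_if_no_better_dist_sublevel:
  fixes M :: "nat \<Rightarrow> 'a::real_normed_vector set"
  assumes M: "\<And>i. i < n \<Longrightarrow> M i \<noteq> {} \<and> convex (M i)" and "s < n" "K \<noteq> {}"
    and dH_K: "\<And>i. i < n \<Longrightarrow> dH K (M i) = ereal (D i)"
    and no_better: "\<And>r. 0 \<le> r \<Longrightarrow> r \<le> D s \<Longrightarrow> dist_sublevel n M (D(s := r)) \<noteq> {} \<Longrightarrow>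
      S_M n M K \<le> S_M n M (dist_sublevel n M (D(s := r)))"
  shows "\<exists>i<n. (SUP x\<in>M i. ereal (infdist x K)) = ereal (D i)"
proof (rule ccontr)
  assume no_attained: "\<not> ?thesis"
  have "(SUP x\<in>M i. ereal (infdist x K)) < ereal (D i)" if "i < n" for i
  proof -
    have "(SUP x\<in>M i. ereal (infdist x K)) \<le> dH K (M i)"
      unfolding dH_eq_SUP_infdist[OF \<open>K \<noteq> {}\<close> conjunct1[OF M[OF that]]] by simp
    then show ?thesis unfolding order_less_le using no_attained that dH_K[OF that] by auto
  qed
  then obtain c where "0 < c" and M_near_K: "\<And>i x. i < n \<Longrightarrow> x \<in> M i \<Longrightarrow> infdist x K \<le> D i - c"
    using exists_uniform_gap[of "{..<n}" "\<lambda>i x. infdist x K" M D] by auto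
  have "\<forall>k\<in>K. infdist k (M i) \<le> D i" if "i < n" for i
    using dH_le_iff[OF \<open>K \<noteq> {}\<close> conjunct1[OF M[OF that]], of "D i"] dH_K[OF that] by simp
  then have "K \<subseteq> dist_sublevel n M D" by (auto simp: dist_sublevel_def)
  then obtain r where r: "0 \<le> r" "r \<le> D s" and L: "dist_sublevel n M (D(s := r)) \<noteq> {}"
    "\<And>i. i < n \<Longrightarrow> dH (dist_sublevel n M (D(s := r))) (M i) \<le> ereal (D i)"
    "dH (dist_sublevel n M (D(s := r))) (M s) < ereal (D s)"
    using exists_dist_sublevel_closer_in_dH[of n M s c K D, OF M \<open>s < n\<close> \<open>0 < c\<close> \<open>K \<noteq> {}\<close> _ M_near_K]
    by blast
  have "S_M n M (dist_sublevel n M (D(s := r))) < ereal (\<Sum>i<n. D i)"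
    unfolding S_M_def
  proof (rule sum_ereal_less_sum)
    show "0 \<le> dH (dist_sublevel n M (D(s := r))) (M i)" if "i \<in> {..<n}" for i
      using dH_nonneg[OF L(1)] M that by blast
  qed (use L \<open>s < n\<close> in auto)
  also have "ereal (\<Sum>i<n. D i) = S_M n M K"
    unfolding S_M_def sum_ereal[symmetric] using dH_K by (intro sum.cong) auto
  finally show False using no_better[OF r L(1)] by simp
qed

theorem mainTheorem16:
  fixes M :: "nat \<Rightarrow> 'a::real_normed_vector set" and n :: nat and d :: "ereal list"
  assumes "n \<ge> 1"
    and "\<And>i. i < n \<Longrightarrow> M i \<noteq> {} \<and> closed (M i) \<and> convex (M i)"
    and "\<And>i j. i < n \<Longrightarrow> j < n \<Longrightarrow> dH (M i) (M j) < \<infinity>"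
    and "Sigma_M n M \<noteq> {}"
    and "d \<in> Omega_M n M"
    and "\<exists>s<n. \<forall>r::real. r \<ge> 0 \<longrightarrow> nbhd r (M s) \<inter> K_d n M d \<noteq> {} \<longrightarrow>
           nbhd r (M s) \<inter> K_d n M d \<in> fin_class (M 0)"
  shows "\<forall>K \<in> Sigma_d n M d. \<exists>i<n. d ! i = (SUP x\<in>M i. pdist x K)"
proof
  fix K assume "K \<in> Sigma_d n M d"
  then have K_Sigma: "K \<in> Sigma_M n M" and d_eq: "\<And>i. i < n \<Longrightarrow> d ! i = dH K (M i)"
    by (auto simp: Sigma_d_def dvec_def)
  then have "K \<noteq> {}" and K_min: "\<And>Y. Y \<in> fin_class (M 0) \<Longrightarrow> S_M n M K \<le> S_M n M Y"
    by (auto simp: Sigma_M_def fin_class_def)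
  have M: "\<And>i. i < n \<Longrightarrow> M i \<noteq> {} \<and> convex (M i)" "closed (M 0)" "0 < n"
    and M0_near: "\<And>j. j < n \<Longrightarrow> dH (M 0) (M j) < \<infinity>"
    using assms(1-3) by auto
  obtain D where dH_K: "\<And>i. i < n \<Longrightarrow> dH K (M i) = ereal (D i)"
    using Sigma_M_dH_real[of K n M, OF K_Sigma M(3) _ M(2) M0_near] M(1) by blast
  obtain s where "s < n" and hyp: "\<And>r. 0 \<le> r \<Longrightarrow> nbhd r (M s) \<inter> K_d n M d \<noteq> {} \<Longrightarrow>
      nbhd r (M s) \<inter> K_d n M d \<in> fin_class (M 0)"
    using assms(6) by blast
  have "\<exists>i<n. (SUP x\<in>M i. ereal (infdist x K)) = ereal (D i)"
  proof (rule exists_SUP_infdist_eq_if_no_better_dist_sublevel[of n M s K D, OF M(1) \<open>s < n\<close> \<open>K \<noteq> {}\<close> dH_K])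
    fix r assume "0 \<le> r" "r \<le> D s" "dist_sublevel n M (D(s := r)) \<noteq> {}"
    moreover have "nbhd r (M s) \<inter> K_d n M d = dist_sublevel n M (D(s := r))"
      using M(1) d_eq dH_K \<open>s < n\<close> \<open>r \<le> D s\<close> by (intro nbhd_Int_K_d_eq_dist_sublevel) auto
    ultimately have "dist_sublevel n M (D(s := r)) \<in> fin_class (M 0)" using hyp by metis
    then show "S_M n M K \<le> S_M n M (dist_sublevel n M (D(s := r)))" by (rule K_min)
  qed
  then show "\<exists>i<n. d ! i = (SUP x\<in>M i. pdist x K)"
    using d_eq dH_K by (auto simp: pdist_eq_infdist[OF \<open>K \<noteq> {}\<close>])
qed

end
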